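(* Let $R'\subseteq R$ be (not necessarily commutative) subrings of a $\mathbb Q$-algebra and let $d\ge1$ be an integer with $dR\subseteq R'$. Then $|R^\times/R'^\times|\le|R/dR|$.
   Context: $R^\times$ denotes the unit group of $R$, and $R^\times/R'^\times$ the set of cosets of the subgroup $R'^\times$. *)

theory Defs
  imports Main "HOL-Library.Equipollence"
begin

text \<open>A (unital, not necessarily commutative) ring A is a Q-algebra iff every positive
integer n is invertible in A (the Q-algebra structure is then unique).\<close>
definition is_Q_algebra :: "'a::ring_1 itself \<Rightarrow> bool" where
  "is_Q_algebra _ \<longleftrightarrow>
     (\<forall>n::nat. n > 0 \<longrightarrow> (\<exists>y::'a. of_nat n * y = 1 \<and> y * of_nat n = 1))"

definition subring_of :: "'a::ring_1 set \<Rightarrow> bool" where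
  "subring_of S \<longleftrightarrow> 0 \<in> S \<and> 1 \<in> S \<and>
     (\<forall>x\<in>S. \<forall>y\<in>S. x + y \<in> S \<and> x * y \<in> S) \<and> (\<forall>x\<in>S. - x \<in> S)"

definition units_of_ring :: "'a::ring_1 set \<Rightarrow> 'a set" where
  "units_of_ring S = {x \<in> S. \<exists>y\<in>S. x * y = 1 \<and> y * x = 1}"

definition unit_cosets :: "'a::ring_1 set \<Rightarrow> 'a set \<Rightarrow> 'a set set" where
  "unit_cosets S S' = (\<lambda>x. (\<lambda>u. x * u) ` units_of_ring S') ` units_of_ring S"

definition mult_set :: "nat \<Rightarrow> 'a::ring_1 set \<Rightarrow> 'a set" where
  "mult_set d S = (\<lambda>r. of_nat d * r) ` S"

definition quot_mult :: "'a::ring_1 set \<Rightarrow> nat \<Rightarrow> 'a set set" where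
  "quot_mult S d = (\<lambda>x. (\<lambda>r. x + r) ` mult_set d S) ` S"

end

theory Submission
  imports Defs
begin

text \<open>If units x, y of R satisfy x = y + d r with r \<in> R, then y\<inverse> x = 1 + d y\<inverse> r
  and x\<inverse> y = 1 - d x\<inverse> r both lie in 1 + dR \<subseteq> R' and are mutually inverse, so x and y
  span the same coset of the unit group of R'. Hence the coset of a unit x depends only on its
  residue class x + dR, and choosing a representative of each coset embeds the coset space
  into R/dR.\<close>

lemma units_of_ring_mult:
  assumes "subring_of S" "a \<in> units_of_ring S" "b \<in> units_of_ring S"
  shows "a * b \<in> units_of_ring S"
proof -
  obtain a' where a': "a \<in> S" "a' \<in> S" "a * a' = 1" "a' * a = 1"
    using assms(2) by (auto simp: units_of_ring_def)
  obtain b' where b': "b \<in> S" "b' \<in> S" "b * b' = 1" "b' * b = 1"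
    using assms(3) by (auto simp: units_of_ring_def)
  have "a * b * (b' * a') = 1" "b' * a' * (a * b) = 1"
    by (metis a'(3,4) b'(3,4) mult.assoc mult_1_left)+
  then show ?thesis
    using a' b' assms(1) unfolding units_of_ring_def subring_of_def by blast
qed

lemma unit_coset_mult_unit:
  assumes S: "subring_of S" and w: "w \<in> units_of_ring S"
  shows "(\<lambda>u. y * w * u) ` units_of_ring S = (\<lambda>u. y * u) ` units_of_ring S"
proof
  show "(\<lambda>u. y * w * u) ` units_of_ring S \<subseteq> (\<lambda>u. y * u) ` units_of_ring S"
    using units_of_ring_mult[OF S w] by (auto simp: mult.assoc)
next
  obtain w' where w': "w' \<in> units_of_ring S" "w * w' = 1"
    using w unfolding units_of_ring_def by blast
  show "(\<lambda>u. y * u) ` units_of_ring S \<subseteq> (\<lambda>u. y * w * u) ` units_of_ring S"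
  proof
    fix z assume "z \<in> (\<lambda>u. y * u) ` units_of_ring S"
    then obtain u where u: "u \<in> units_of_ring S" "z = y * u" by blast
    have "z = y * w * (w' * u)"
      using u(2) w'(2) by (metis mult.assoc mult_1_left)
    with units_of_ring_mult[OF S w'(1) u(1)]
    show "z \<in> (\<lambda>u. y * w * u) ` units_of_ring S" by blast
  qed
qed

lemma congruent_units_quotient_in_units:
  assumes R: "subring_of R" and R': "subring_of R'" and dR: "mult_set d R \<subseteq> R'"
    and x: "x \<in> units_of_ring R" and y: "y \<in> units_of_ring R"
    and r: "r \<in> R" and xy: "x = y + of_nat d * r"
  shows "\<exists>w\<in>units_of_ring R'. x = y * w"
proof -
  obtain xi where xi: "xi \<in> R" "x * xi = 1" "xi * x = 1"
    using x by (auto simp: units_of_ring_def)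
  obtain yi where yi: "yi \<in> R" "y * yi = 1" "yi * y = 1"
    using y by (auto simp: units_of_ring_def)
  have "yi * r \<in> R" "xi * - r \<in> R"
    using R xi(1) yi(1) r unfolding subring_of_def by auto
  then have "of_nat d * (yi * r) \<in> R'" "of_nat d * (xi * - r) \<in> R'"
    using dR unfolding mult_set_def by auto
  moreover have "yi * x = 1 + of_nat d * (yi * r)"
  proof -
    have "yi * x = yi * y + (yi * of_nat d) * r"
      unfolding xy by (simp only: distrib_left mult.assoc)
    then show ?thesis by (simp only: yi(3) mult_of_nat_commute mult.assoc)
  qed
  moreover have "xi * y = 1 + of_nat d * (xi * - r)"
  proof -
    have "xi * y = xi * x + (xi * of_nat d) * - r"
      using xy by (simp add: distrib_left mult.assoc)
    then show ?thesis by (simp only: xi(3) mult_of_nat_commute mult.assoc)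
  qed
  ultimately have "yi * x \<in> R'" "xi * y \<in> R'"
    using R' unfolding subring_of_def by metis+
  moreover have "yi * x * (xi * y) = 1" "xi * y * (yi * x) = 1"
    by (metis mult.assoc mult_1_left xi(2,3) yi(2,3))+
  ultimately have "yi * x \<in> units_of_ring R'"
    unfolding units_of_ring_def by blast
  moreover have "x = y * (yi * x)"
    by (metis mult.assoc mult_1_left yi(2))
  ultimately show ?thesis by blast
qed

lemma image_lepoll_image_if_fibres_finer:
  assumes "\<And>x y. x \<in> A \<Longrightarrow> y \<in> A \<Longrightarrow> h x = h y \<Longrightarrow> g x = g y"
  shows "g ` A \<lesssim> h ` A"
proof (rule subset_image_lepoll)
  let ?k = "\<lambda>K. g (SOME x. x \<in> A \<and> h x = K)"
  have "g x = ?k (h x)" if "x \<in> A" for x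
    using assms[OF that] someI[of "\<lambda>y. y \<in> A \<and> h y = h x", OF conjI[OF that refl]]
    by metis
  then show "g ` A \<subseteq> ?k ` h ` A" by blast
qed

theorem lemma10p11:
  fixes R R' :: "'a::ring_1 set" and d :: nat
  assumes "is_Q_algebra TYPE('a)"
    and "subring_of R" and "subring_of R'" and "R' \<subseteq> R"
    and "d \<ge> 1" and "mult_set d R \<subseteq> R'"
  shows "unit_cosets R R' \<lesssim> quot_mult R d"
proof -
  let ?coset = "\<lambda>x. (\<lambda>u. x * u) ` units_of_ring R'"
  let ?class = "\<lambda>x. (\<lambda>r. x + r) ` mult_set d R"
  have "?coset x = ?coset y"
    if x: "x \<in> units_of_ring R" and y: "y \<in> units_of_ring R" and "?class x = ?class y" for x y
  proof -
    have "0 \<in> mult_set d R"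
      using assms(2) unfolding mult_set_def subring_of_def by force
    then have "x \<in> ?class y"
      using \<open>?class x = ?class y\<close> by (metis add.right_neutral image_eqI)
    then obtain r where "r \<in> R" "x = y + of_nat d * r"
      unfolding mult_set_def by blast
    then obtain w where "w \<in> units_of_ring R'" "x = y * w"
      using congruent_units_quotient_in_units[OF assms(2,3,6) x y] by blast
    then show ?thesis
      using unit_coset_mult_unit[OF assms(3)] by simp
  qed
  then have "unit_cosets R R' \<lesssim> ?class ` units_of_ring R"
    unfolding unit_cosets_def by (rule image_lepoll_image_if_fibres_finer)
  also have "\<dots> \<lesssim> quot_mult R d"
    unfolding quot_mult_def units_of_ring_def by (intro subset_imp_lepoll image_mono) blast
  finally show ?thesis .
qed

end
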